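(* Let $\mathcal{T} = \{\tau_1, \ldots, \tau_{i-1}, \tau_i\}$ be a set of tasks scheduled by preemptive fixed-priority scheduling on a single processor, ordered by decreasing priority ($\tau_1$ highest), where each task $\tau_j$ has worst-case computation time $C_j$, period (minimum inter-arrival time) $T_j$ and relative deadline $D_j$ (possibly $D_j > T_j$), with zero jitter. Let $H_i = \mathrm{lcm}(T_1, \ldots, T_i)$ and $h_i = H_i / T_i$. For $h \geq 1$, let $\mathcal{T}^{(h)}$ be the task set obtained from $\mathcal{T}$ by replacing $\tau_i$ with a task $\tau_i^{(h)}$ having computation time $C_i^{(h)} = h C_i$, deadline $D_i^{(h)} = (h-1) T_i + D_i$, the same period $T_i$ and the same priority as $\tau_i$. If for every $h = 1, \ldots, h_i$ the task $\tau_i^{(h)}$ completes before its deadline when scheduled in $\mathcal{T}^{(h)}$, then the first $h_i$ jobs of $\tau_i$ (scheduled in $\mathcal{T}$) also complete before their deadlines.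
   Context: A task $\tau_j$ releases an infinite sequence of jobs; the $k$-th job is activated at $a_{j,k}$, consecutive activations being separated by (at least) $T_j$, executes for at most $C_j$ time units and must finish by $a_{j,k} + D_j$. Under preemptive fixed-priority scheduling, at any time the processor executes the pending job of highest priority, and jobs of a task are executed in activation order (a job cannot start before the previous job of the same task has completed). *)

theory Defs
  imports Main
begin

text \<open>Tasks are numbered 1..n; a smaller index means a higher priority.
  C j: worst-case (here: actual) execution time of every job of task j;
  arr j k: activation time of the k-th job (k = 0, 1, ...) of task j.
  A service state s j k is the amount of processor time job k of task j has received.\<close>

text \<open>The current job of task j: its earliest job that is not yet complete
  (jobs of a task are executed in activation order).\<close>
definition cur_job :: "(nat \<Rightarrow> nat) \<Rightarrow> (nat \<Rightarrow> nat \<Rightarrow> nat) \<Rightarrow> nat \<Rightarrow> nat" where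
  "cur_job C s j = (LEAST k. s j k < C j)"

definition task_ready ::
  "(nat \<Rightarrow> nat) \<Rightarrow> (nat \<Rightarrow> nat \<Rightarrow> nat) \<Rightarrow> (nat \<Rightarrow> nat \<Rightarrow> nat) \<Rightarrow> nat \<Rightarrow> nat \<Rightarrow> bool" where
  "task_ready C arr s t j \<longleftrightarrow>
     s j (cur_job C s j) < C j \<and> arr j (cur_job C s j) \<le> t"

definition fp_choice ::
  "nat \<Rightarrow> (nat \<Rightarrow> nat) \<Rightarrow> (nat \<Rightarrow> nat \<Rightarrow> nat) \<Rightarrow> (nat \<Rightarrow> nat \<Rightarrow> nat) \<Rightarrow> nat \<Rightarrow> nat option" where
  "fp_choice n C arr s t =
     (if \<exists>j\<in>{1..n}. task_ready C arr s t j
      then Some (LEAST j. j \<in> {1..n} \<and> task_ready C arr s t j) else None)"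

text \<open>fp_service n C arr t j k: processor time received by job k of task j in [0, t).
  In slot [t, t+1) the processor executes the current job of the chosen task.\<close>
primrec fp_service ::
  "nat \<Rightarrow> (nat \<Rightarrow> nat) \<Rightarrow> (nat \<Rightarrow> nat \<Rightarrow> nat) \<Rightarrow> nat \<Rightarrow> nat \<Rightarrow> nat \<Rightarrow> nat" where
  "fp_service n C arr 0 = (\<lambda>j k. 0)"
| "fp_service n C arr (Suc t) =
     (let s = fp_service n C arr t in
      (\<lambda>j k. s j k + (if fp_choice n C arr s t = Some j \<and> k = cur_job C s j then 1 else 0)))"

definition completes_by ::
  "nat \<Rightarrow> (nat \<Rightarrow> nat) \<Rightarrow> (nat \<Rightarrow> nat \<Rightarrow> nat) \<Rightarrow> nat \<Rightarrow> nat \<Rightarrow> nat \<Rightarrow> bool" where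
  "completes_by n C arr j k t \<longleftrightarrow> C j \<le> fp_service n C arr t j k"

text \<open>Synchronous periodic activations with zero jitter: a_{j,k} = k T_j.\<close>
definition periodic_arr :: "(nat \<Rightarrow> nat) \<Rightarrow> nat \<Rightarrow> nat \<Rightarrow> nat" where
  "periodic_arr T j k = k * T j"

end

theory Submission
  imports Defs
begin

text \<open>Let idle(t) be the processor time in [0, t) left unused by the higher-priority tasks. Under
  synchronous periodic releases idle is superadditive: no window of length L contains less idle
  time than [0, L) (the critical instant). Given job k of \<tau>_i with deadline t = k T_i + D_i, let
  s \<le> t be the last instant at which \<tau>_i has no pending job and m the number of its jobs finished
  by s, so s \<le> m T_i; from s on, \<tau>_i runs in every idle slot. If m > k we are done. Otherwise the
  h = k + 1 - m remaining jobs need h C_i units of idle time after m T_i. The single job of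
  \<tau>_i^(h) also runs only in idle slots, and the higher-priority tasks are unchanged, so by
  hypothesis [0, (h - 1) T_i + D_i) contains h C_i units of idle time; by superadditivity so does
  the window [m T_i, t), and job k completes by t.\<close>

lemma min_diff_mult_add_indicator:
  assumes "(c::nat) > 0"
  shows "min c (w - k * c) + (if k = w div c then 1 else 0) = min c (w + 1 - k * c)"
proof -
  consider "Suc k \<le> w div c" | "k = w div c" | "Suc (w div c) \<le> k" by linarith
  then show ?thesis
  proof cases
    case 1
    then have "Suc k * c \<le> w div c * c" by (rule mult_le_mono1)
    then have "c + k * c \<le> w div c * c" by simp
    then have "c + k * c \<le> w" using div_times_less_eq_dividend[of w c] by linarith
    then show ?thesis using 1 by (simp add: min_def)
  next
    case 2
    have "k * c + w mod c = w" "w mod c < c" using assms 2 by simp_all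
    then have "w - k * c = w mod c" "w + 1 - k * c = w mod c + 1" by linarith+
    then show ?thesis using \<open>w mod c < c\<close> 2 by simp
  next
    case 3
    then have "Suc (w div c) * c \<le> k * c" by (rule mult_le_mono1)
    then have "c + w div c * c \<le> k * c" by simp
    then have "w + 1 \<le> k * c" using dividend_less_div_times[OF assms, of w] by linarith
    then show ?thesis using 3 by simp
  qed
qed

lemma Least_min_diff_mult_less:
  assumes "(c::nat) > 0"
  shows "(LEAST k. min c (w - k * c) < c) = w div c"
proof (rule Least_equality)
  show "min c (w - w div c * c) < c" using assms by (simp add: minus_div_mult_eq_mod)
  fix k assume "min c (w - k * c) < c"
  then have "w < Suc k * c" by simp
  then show "w div c \<le> k" using assms by (metis div_less_iff_less_mult less_Suc_eq_le)
qed

lemma le_ceil_div_mult: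
  assumes "(T::nat) > 0"
  shows "x \<le> (x + T - 1) div T * T"
proof -
  have "(x + T - 1) div T * T + (x + T - 1) mod T = x + T - 1" by simp
  moreover have "(x + T - 1) mod T < T" using assms by simp
  ultimately show ?thesis using assms by linarith
qed

lemma ceil_div_add_le:
  assumes "(T::nat) > 0"
  shows "(x + y + T - 1) div T \<le> (x + T - 1) div T + (y + T - 1) div T"
proof -
  have "x + y + T - 1 < ((x + T - 1) div T + (y + T - 1) div T + 1) * T"
    using le_ceil_div_mult[OF assms, of x] le_ceil_div_mult[OF assms, of y] assms
    by (simp add: algebra_simps)
  then show ?thesis using assms by (metis div_less_iff_less_mult less_Suc_eq_le Suc_eq_plus1)
qed

text \<open>served R t is the processor time used in [0, t) by a work-conserving processor serving a
  workload of which R u units are released at or before time u.\<close>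
primrec served :: "(nat \<Rightarrow> nat) \<Rightarrow> nat \<Rightarrow> nat" where
  "served R 0 = 0"
| "served R (Suc t) = served R t + (if served R t < R t then 1 else 0)"

definition idle_time :: "(nat \<Rightarrow> nat) \<Rightarrow> nat \<Rightarrow> nat" where
  "idle_time R t = t - served R t"

lemma served_le: "served R t \<le> t"
  by (induction t) auto

lemma served_le_add_diff: "s \<le> t \<Longrightarrow> served R t \<le> served R s + (t - s)"
  by (induction t) (auto simp: le_Suc_eq)

lemma idle_time_mono: "s \<le> t \<Longrightarrow> idle_time R s \<le> idle_time R t"
  unfolding idle_time_def using served_le_add_diff[of s t R] served_le[of R s] by linarith

text \<open>rbf u counts the work released strictly before u, so that R u = rbf (u + 1).\<close>
locale subadditive_demand =
  fixes R rbf :: "nat \<Rightarrow> nat"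
  assumes R_eq_rbf_Suc: "R u = rbf (Suc u)"
    and mono_rbf: "mono rbf"
    and rbf_0: "rbf 0 = 0"
    and rbf_add_le: "rbf (x + y) \<le> rbf x + rbf y"
begin

lemma served_le_rbf: "served R t \<le> rbf t"
proof (induction t)
  case 0 then show ?case by (simp add: rbf_0)
next
  case (Suc t)
  have "rbf t \<le> rbf (Suc t)" by (rule monoD[OF mono_rbf]) simp
  then show ?case using Suc R_eq_rbf_Suc[of t] by auto
qed

text \<open>The witness s is the start of the busy period containing t.\<close>
lemma served_eq_rbf_add: "\<exists>s\<le>t. served R t = rbf s + (t - s)"
proof (induction t)
  case 0 then show ?case by (simp add: rbf_0)
next
  case (Suc t)
  then obtain s where s: "s \<le> t" "served R t = rbf s + (t - s)" by blast
  show ?case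
  proof (cases "served R t < R t")
    case True
    then have "served R (Suc t) = rbf s + (Suc t - s)" using s by simp
    then show ?thesis using s(1) by (intro exI[of _ s]) auto
  next
    case False
    have "rbf t \<le> rbf (Suc t)" by (rule monoD[OF mono_rbf]) simp
    then have "served R (Suc t) = rbf (Suc t) + (Suc t - Suc t)"
      using False served_le_rbf[of t] R_eq_rbf_Suc[of t] by simp
    then show ?thesis by blast
  qed
qed

lemma served_le_rbf_add: "s \<le> t \<Longrightarrow> served R t \<le> rbf s + (t - s)"
  using served_le_add_diff[of s t R] served_le_rbf[of s] by simp

lemma served_add_le: "served R (a + b) \<le> served R a + served R b"
proof -
  obtain s where s: "s \<le> a" "served R a = rbf s + (a - s)" using served_eq_rbf_add by blast
  obtain x where x: "x \<le> b" "served R b = rbf x + (b - x)" using served_eq_rbf_add by blast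
  have "served R (a + b) \<le> rbf (s + x) + (a + b - (s + x))"
    using s x by (intro served_le_rbf_add) simp
  also have "\<dots> \<le> rbf s + rbf x + (a + b - (s + x))" using rbf_add_le[of s x] by simp
  also have "\<dots> = served R a + served R b" using s x by simp
  finally show ?thesis .
qed

lemma idle_time_superadditive: "idle_time R a + idle_time R b \<le> idle_time R (a + b)"
  unfolding idle_time_def using served_add_le[of a b] served_le[of R a] served_le[of R b] by linarith

end

text \<open>Work done in [0, t) by a task with execution time c and period T that runs only in slots
  left idle by R: its current job is job number lp_work R c T t div c.\<close>
primrec lp_work :: "(nat \<Rightarrow> nat) \<Rightarrow> nat \<Rightarrow> nat \<Rightarrow> nat \<Rightarrow> nat" where
  "lp_work R c T 0 = 0"
| "lp_work R c T (Suc t) = lp_work R c T t +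
     (if \<not> served R t < R t \<and> lp_work R c T t div c * T \<le> t then 1 else 0)"

lemma lp_work_le_idle_time: "lp_work R c T t \<le> idle_time R t"
  unfolding idle_time_def by (induction t) (use served_le in \<open>auto simp: Suc_diff_le\<close>)

text \<open>The witness s is the last instant up to t at which the task has no pending job; from then
  on it uses every idle slot.\<close>
lemma lp_work_last_release:
  "\<exists>s\<le>t. lp_work R c T t + idle_time R s = lp_work R c T s + idle_time R t
      \<and> s \<le> lp_work R c T s div c * T"
proof (induction t)
  case 0 then show ?case by simp
next
  case (Suc t)
  let ?W = "lp_work R c T"
  obtain s where s: "s \<le> t" "?W t + idle_time R s = ?W s + idle_time R t" "s \<le> ?W s div c * T"
    using Suc.IH by blast
  show ?case
  proof (cases "\<not> served R t < R t \<and> \<not> ?W t div c * T \<le> t")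
    case True
    then have "Suc t \<le> ?W (Suc t) div c * T" by simp
    then show ?thesis by (intro exI[of _ "Suc t"]) simp
  next
    case False
    have "served R t \<le> t" by (rule served_le)
    then have "?W (Suc t) + idle_time R s = ?W s + idle_time R (Suc t)"
      using s(2) False unfolding idle_time_def by (cases "served R t < R t") auto
    then show ?thesis using s(1,3) by (intro exI[of _ s]) simp
  qed
qed

lemma (in subadditive_demand) lp_work_completion:
  assumes jobs: "\<And>h. 1 \<le> h \<Longrightarrow> h \<le> k + 1 \<Longrightarrow> h * c \<le> lp_work R (h * c) T ((h - 1) * T + D)"
  shows "(k + 1) * c \<le> lp_work R c T (k * T + D)"
proof -
  let ?W = "lp_work R c T"
  define t where "t = k * T + D"
  obtain s where s: "s \<le> t" "?W t + idle_time R s = ?W s + idle_time R t" "s \<le> ?W s div c * T"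
    using lp_work_last_release by blast
  define m where "m = ?W s div c"
  have done_s: "m * c \<le> ?W s" unfolding m_def by simp
  have idle_s: "idle_time R s \<le> idle_time R (m * T)" using idle_time_mono s(3) unfolding m_def .
  have "(k + 1) * c \<le> ?W t"
  proof (cases "k + 1 \<le> m")
    case True
    then have "(k + 1) * c \<le> m * c" by (rule mult_le_mono1)
    then show ?thesis using done_s s(2) idle_time_mono[OF s(1), of R] by linarith
  next
    case False
    define h where "h = k + 1 - m"
    have "1 \<le> h" "h \<le> k + 1" using False unfolding h_def by simp_all
    then have "h * c \<le> lp_work R (h * c) T ((h - 1) * T + D)" by (rule jobs)
    also have "\<dots> \<le> idle_time R ((h - 1) * T + D)" by (rule lp_work_le_idle_time)
    finally have job_h: "h * c \<le> idle_time R ((h - 1) * T + D)" .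
    have "m * T + ((h - 1) * T + D) = t"
      using False unfolding h_def t_def by (simp add: add_mult_distrib[symmetric])
    then have "idle_time R (m * T) + idle_time R ((h - 1) * T + D) \<le> idle_time R t"
      using idle_time_superadditive[of "m * T" "(h - 1) * T + D"] by simp
    moreover have "(k + 1) * c = m * c + h * c"
      using False unfolding h_def by (simp add: add_mult_distrib[symmetric])
    ultimately show ?thesis using job_h done_s idle_s s(2) by linarith
  qed
  then show ?thesis unfolding t_def .
qed

primrec fp_exec :: "nat \<Rightarrow> (nat \<Rightarrow> nat) \<Rightarrow> (nat \<Rightarrow> nat \<Rightarrow> nat) \<Rightarrow> nat \<Rightarrow> nat \<Rightarrow> nat" where
  "fp_exec n C arr j 0 = 0"
| "fp_exec n C arr j (Suc t) = fp_exec n C arr j t +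
     (if fp_choice n C arr (fp_service n C arr t) t = Some j then 1 else 0)"

lemma fp_service_eq:
  assumes "C j > 0"
  shows "fp_service n C arr t j k = min (C j) (fp_exec n C arr j t - k * C j)"
proof (induction t arbitrary: k)
  case 0 show ?case by simp
next
  case (Suc t)
  let ?s = "fp_service n C arr t"
  have cur: "cur_job C ?s j = fp_exec n C arr j t div C j"
    unfolding cur_job_def Suc.IH using Least_min_diff_mult_less[OF assms] by simp
  show ?case
  proof (cases "fp_choice n C arr ?s t = Some j")
    case True
    then show ?thesis using min_diff_mult_add_indicator[OF assms, of "fp_exec n C arr j t" k]
      by (simp add: Let_def Suc.IH cur)
  next
    case False
    then show ?thesis by (simp add: Let_def Suc.IH)
  qed
qed

lemma cur_job_fp_service:
  assumes "C j > 0"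
  shows "cur_job C (fp_service n C arr t) j = fp_exec n C arr j t div C j"
  unfolding cur_job_def fp_service_eq[where C=C and j=j, OF assms] using Least_min_diff_mult_less[OF assms] by simp

lemma task_ready_fp_service_iff:
  assumes "C j > 0"
  shows "task_ready C arr (fp_service n C arr t) t j \<longleftrightarrow> arr j (fp_exec n C arr j t div C j) \<le> t"
  unfolding task_ready_def cur_job_fp_service[where C=C and j=j, OF assms] fp_service_eq[where C=C and j=j, OF assms]
  using assms by (simp add: minus_div_mult_eq_mod)

lemma completes_by_iff_fp_exec:
  assumes "C j > 0"
  shows "completes_by n C arr j k t \<longleftrightarrow> (k + 1) * C j \<le> fp_exec n C arr j t"
  unfolding completes_by_def fp_service_eq[where C=C and j=j, OF assms] using assms by auto

lemma fp_choice_eq_Some_iff: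
  "fp_choice n C arr s t = Some j \<longleftrightarrow>
     j \<in> {1..n} \<and> task_ready C arr s t j \<and> (\<forall>i\<in>{1..<j}. \<not> task_ready C arr s t i)"
proof -
  let ?P = "\<lambda>i. i \<in> {1..n} \<and> task_ready C arr s t i"
  let ?first = "\<lambda>j. \<forall>i\<in>{1..<j}. \<not> task_ready C arr s t i"
  have choice: "fp_choice n C arr s t = (if \<exists>i. ?P i then Some (LEAST i. ?P i) else None)"
    unfolding fp_choice_def Bex_def ..
  show ?thesis
  proof
    assume "fp_choice n C arr s t = Some j"
    then have ex: "\<exists>i. ?P i" and j: "j = (LEAST i. ?P i)"
      using choice by (metis option.distinct(1), metis option.distinct(1) option.inject)
    have "?P j" using LeastI_ex[OF ex] unfolding j[symmetric] .
    moreover have "?first j" using not_less_Least[of _ ?P] \<open>?P j\<close> unfolding j[symmetric] by auto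
    ultimately show "j \<in> {1..n} \<and> task_ready C arr s t j \<and> ?first j" by blast
  next
    assume j: "j \<in> {1..n} \<and> task_ready C arr s t j \<and> ?first j"
    then have "(LEAST i. ?P i) = j"
      by (intro Least_equality) (auto simp: not_less[symmetric])
    then show "fp_choice n C arr s t = Some j" using j choice by auto
  qed
qed

lemma fp_choice_higher_iff:
  "(\<exists>j\<in>{1..<n}. fp_choice n C arr s t = Some j) \<longleftrightarrow> (\<exists>j\<in>{1..<n}. task_ready C arr s t j)"
proof
  assume "\<exists>j\<in>{1..<n}. fp_choice n C arr s t = Some j"
  then show "\<exists>j\<in>{1..<n}. task_ready C arr s t j" using fp_choice_eq_Some_iff by blast
next
  assume "\<exists>j\<in>{1..<n}. task_ready C arr s t j"
  then obtain j where j: "j \<in> {1..<n}" "task_ready C arr s t j" by blast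
  let ?L = "LEAST i. i \<in> {1..n} \<and> task_ready C arr s t i"
  have "?L \<in> {1..n} \<and> task_ready C arr s t ?L" by (rule LeastI[of _ j]) (use j in auto)
  moreover have "?L \<le> j" by (rule Least_le) (use j in auto)
  moreover have "fp_choice n C arr s t = Some ?L" using j unfolding fp_choice_def by auto
  ultimately show "\<exists>j\<in>{1..<n}. fp_choice n C arr s t = Some j" using j(1) by auto
qed

lemma sum_indicator_Some:
  "(\<Sum>j\<in>A. if c = Some j then 1 else 0::nat) = (if \<exists>j\<in>A. c = Some j then 1 else 0)"
  if "finite A"
  using that by (cases c) (auto simp: sum.delta')

text \<open>Higher-priority work released at or before u (hp_demand) and strictly before u (hp_rbf).\<close>
definition hp_demand :: "nat \<Rightarrow> (nat \<Rightarrow> nat) \<Rightarrow> (nat \<Rightarrow> nat) \<Rightarrow> nat \<Rightarrow> nat" where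
  "hp_demand n C T u = (\<Sum>j\<in>{1..<n}. C j * (u div T j + 1))"

definition hp_rbf :: "nat \<Rightarrow> (nat \<Rightarrow> nat) \<Rightarrow> (nat \<Rightarrow> nat) \<Rightarrow> nat \<Rightarrow> nat" where
  "hp_rbf n C T u = (\<Sum>j\<in>{1..<n}. C j * ((u + T j - 1) div T j))"

lemma hp_demand_fun_upd: "hp_demand n (C(n := c)) T = hp_demand n C T"
  unfolding hp_demand_def by (intro ext sum.cong) auto

lemma subadditive_demand_hp_demand:
  assumes "\<forall>j\<in>{1..n}. C j > 0 \<and> T j > 0"
  shows "subadditive_demand (hp_demand n C T) (hp_rbf n C T)"
proof
  have T: "T j > 0" if "j \<in> {1..<n}" for j using assms that by auto
  show "hp_demand n C T u = hp_rbf n C T (Suc u)" for u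
    unfolding hp_demand_def hp_rbf_def using T by (intro sum.cong) (auto simp: div_add_self2)
  show "mono (hp_rbf n C T)"
    unfolding hp_rbf_def by (intro monoI sum_mono mult_le_mono2 div_le_mono) simp
  show "hp_rbf n C T 0 = 0"
    unfolding hp_rbf_def using T by (intro sum.neutral) auto
  show "hp_rbf n C T (x + y) \<le> hp_rbf n C T x + hp_rbf n C T y" for x y
    unfolding hp_rbf_def sum.distrib[symmetric] add_mult_distrib2[symmetric]
    using ceil_div_add_le T by (intro sum_mono mult_le_mono2) blast
qed

lemma task_ready_periodic_iff:
  assumes "C j > 0" "T j > 0"
  shows "task_ready C (periodic_arr T) (fp_service n C (periodic_arr T) t) t j
     \<longleftrightarrow> fp_exec n C (periodic_arr T) j t < C j * (t div T j + 1)"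
proof -
  let ?w = "fp_exec n C (periodic_arr T) j t"
  have "?w div C j * T j \<le> t \<longleftrightarrow> ?w div C j < t div T j + 1"
    using assms(2) by (simp add: less_eq_div_iff_mult_less_eq less_Suc_eq_le)
  also have "\<dots> \<longleftrightarrow> ?w < C j * (t div T j + 1)"
    using assms(1) by (simp add: div_less_iff_less_mult mult.commute)
  finally show ?thesis
    unfolding task_ready_fp_service_iff[where C=C and j=j, OF assms(1)] periodic_arr_def .
qed

lemma fp_exec_periodic_le:
  assumes "C j > 0" "T j > 0"
  shows "fp_exec n C (periodic_arr T) j t \<le> C j * ((t + T j - 1) div T j)"
proof (induction t)
  case 0 then show ?case by simp
next
  case (Suc t)
  have step: "(Suc t + T j - 1) div T j = t div T j + 1" using assms(2) by (simp add: div_add_self2)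
  show ?case
  proof (cases "fp_choice n C (periodic_arr T) (fp_service n C (periodic_arr T) t) t = Some j")
    case True
    then have "task_ready C (periodic_arr T) (fp_service n C (periodic_arr T) t) t j"
      using fp_choice_eq_Some_iff by blast
    then have "fp_exec n C (periodic_arr T) j t < C j * (t div T j + 1)"
      using task_ready_periodic_iff[where C=C and j=j and T=T, OF assms] by blast
    then show ?thesis using True step by simp
  next
    case False
    have "C j * ((t + T j - 1) div T j) \<le> C j * ((Suc t + T j - 1) div T j)"
      by (intro mult_le_mono2 div_le_mono) simp
    moreover have "fp_exec n C (periodic_arr T) j (Suc t) = fp_exec n C (periodic_arr T) j t"
      using False by simp
    ultimately show ?thesis using Suc.IH by linarith
  qed
qed

text \<open>Some higher-priority task is pending exactly when less work has been executed than
  released, because each such task has executed at most what it has released.\<close>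
lemma hp_ready_iff:
  assumes "\<forall>j\<in>{1..n}. C j > 0 \<and> T j > 0"
  shows "(\<exists>j\<in>{1..<n}. task_ready C (periodic_arr T) (fp_service n C (periodic_arr T) t) t j)
     \<longleftrightarrow> (\<Sum>j\<in>{1..<n}. fp_exec n C (periodic_arr T) j t) < hp_demand n C T t"
proof -
  let ?W = "\<lambda>j. fp_exec n C (periodic_arr T) j t"
  let ?A = "\<lambda>j. C j * (t div T j + 1)"
  have le: "?W j \<le> ?A j" if "j \<in> {1..<n}" for j
  proof -
    have j: "C j > 0" "T j > 0" using that assms by auto
    have "(t + T j - 1) div T j \<le> t div T j + 1"
      using j(2) div_le_mono[of "t + T j - 1" "t + T j" "T j"] by (simp add: div_add_self2)
    then show ?thesis using fp_exec_periodic_le[where C=C and j=j and T=T, OF j, of n t] mult_le_mono2 order_trans by blast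
  qed
  have "(\<exists>j\<in>{1..<n}. ?W j < ?A j) \<longleftrightarrow> sum ?W {1..<n} < sum ?A {1..<n}"
  proof
    assume "\<exists>j\<in>{1..<n}. ?W j < ?A j"
    then show "sum ?W {1..<n} < sum ?A {1..<n}" using le by (intro sum_strict_mono_ex1) auto
  next
    assume less: "sum ?W {1..<n} < sum ?A {1..<n}"
    show "\<exists>j\<in>{1..<n}. ?W j < ?A j"
    proof (rule ccontr)
      assume "\<not> (\<exists>j\<in>{1..<n}. ?W j < ?A j)"
      then have "sum ?A {1..<n} \<le> sum ?W {1..<n}" by (intro sum_mono) (simp add: not_less)
      with less show False by simp
    qed
  qed
  moreover have "task_ready C (periodic_arr T) (fp_service n C (periodic_arr T) t) t j \<longleftrightarrow> ?W j < ?A j"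
    if "j \<in> {1..<n}" for j
    using task_ready_periodic_iff[of C j T n t] that assms by auto
  ultimately show ?thesis unfolding hp_demand_def by auto
qed

lemma hp_fp_exec_eq_served:
  assumes "\<forall>j\<in>{1..n}. C j > 0 \<and> T j > 0"
  shows "(\<Sum>j\<in>{1..<n}. fp_exec n C (periodic_arr T) j t) = served (hp_demand n C T) t"
proof (induction t)
  case 0 then show ?case by simp
next
  case (Suc t)
  let ?c = "fp_choice n C (periodic_arr T) (fp_service n C (periodic_arr T) t) t"
  have "(\<Sum>j\<in>{1..<n}. fp_exec n C (periodic_arr T) j (Suc t)) =
        served (hp_demand n C T) t + (if \<exists>j\<in>{1..<n}. ?c = Some j then 1 else 0)"
    using Suc.IH by (simp add: sum.distrib sum_indicator_Some)
  also have "(\<exists>j\<in>{1..<n}. ?c = Some j) \<longleftrightarrow> served (hp_demand n C T) t < hp_demand n C T t"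
    by (simp only: fp_choice_higher_iff hp_ready_iff[OF assms] Suc.IH)
  finally show ?case by simp
qed

lemma fp_exec_lowest_eq_lp_work:
  assumes "n \<ge> 1" "\<forall>j\<in>{1..n}. C j > 0 \<and> T j > 0"
  shows "fp_exec n C (periodic_arr T) n t = lp_work (hp_demand n C T) (C n) (T n) t"
proof (induction t)
  case 0 then show ?case by simp
next
  case (Suc t)
  let ?s = "fp_service n C (periodic_arr T) t"
  have Cn: "C n > 0" using assms by auto
  have "task_ready C (periodic_arr T) ?s t n
      \<longleftrightarrow> periodic_arr T n (fp_exec n C (periodic_arr T) n t div C n) \<le> t"
    by (rule task_ready_fp_service_iff[where C=C and j=n, OF Cn])
  also have "\<dots> \<longleftrightarrow> lp_work (hp_demand n C T) (C n) (T n) t div C n * T n \<le> t"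
    by (simp only: Suc.IH periodic_arr_def)
  moreover have "(\<exists>i\<in>{1..<n}. task_ready C (periodic_arr T) ?s t i)
      \<longleftrightarrow> served (hp_demand n C T) t < hp_demand n C T t"
    using hp_ready_iff[OF assms(2)] hp_fp_exec_eq_served[OF assms(2)] by simp
  ultimately have "fp_choice n C (periodic_arr T) ?s t = Some n \<longleftrightarrow>
      \<not> served (hp_demand n C T) t < hp_demand n C T t
      \<and> lp_work (hp_demand n C T) (C n) (T n) t div C n * T n \<le> t"
    using fp_choice_eq_Some_iff[of n C "periodic_arr T" ?s t n] assms(1) by auto
  then show ?case using Suc.IH by simp
qed

theorem lemma1:
  fixes n :: nat and C T D :: "nat \<Rightarrow> nat"
  assumes "n \<ge> 1"
    and "\<forall>j\<in>{1..n}. C j > 0 \<and> T j > 0"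
    and "\<forall>h\<in>{1..Lcm (T ` {1..n}) div T n}.
           completes_by n (C(n := h * C n)) (periodic_arr T) n 0 ((h - 1) * T n + D n)"
  shows "\<forall>k < Lcm (T ` {1..n}) div T n.
           completes_by n C (periodic_arr T) n k (periodic_arr T n k + D n)"
proof (intro allI impI)
  fix k assume k: "k < Lcm (T ` {1..n}) div T n"
  let ?R = "hp_demand n C T"
  have Cn: "C n > 0" using assms(1,2) by auto
  have "h * C n \<le> lp_work ?R (h * C n) (T n) ((h - 1) * T n + D n)"
    if h: "1 \<le> h" "h \<le> k + 1" for h
  proof -
    let ?C' = "C(n := h * C n)"
    have C': "\<forall>j\<in>{1..n}. ?C' j > 0 \<and> T j > 0" using assms(2) h by auto
    \<comment> \<open>the hyperperiod enters only as an upper bound on h and k\<close>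
    have "completes_by n ?C' (periodic_arr T) n 0 ((h - 1) * T n + D n)"
      using assms(3) h k by auto
    moreover have "?C' n > 0" using Cn h by simp
    ultimately have "h * C n \<le> fp_exec n ?C' (periodic_arr T) n ((h - 1) * T n + D n)"
      using completes_by_iff_fp_exec[where C="?C'" and j=n] by simp
    then show ?thesis
      unfolding fp_exec_lowest_eq_lp_work[OF assms(1) C'] hp_demand_fun_upd by simp
  qed
  then have "(k + 1) * C n \<le> lp_work ?R (C n) (T n) (k * T n + D n)"
    by (rule subadditive_demand.lp_work_completion[OF subadditive_demand_hp_demand[OF assms(2)]])
  then show "completes_by n C (periodic_arr T) n k (periodic_arr T n k + D n)"
    using completes_by_iff_fp_exec[where C=C and j=n, OF Cn] fp_exec_lowest_eq_lp_work[OF assms(1,2)]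
    by (simp add: periodic_arr_def)
qed

end
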